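(* Let $S=\{(x_1,x_2)\in\mathbb{R}^2:x_1\ge0,\ x_1^2-x_2^3\ge0\}$ and $\tilde S^{o}=\{(x_0,x_1,x_2):x_1\ge0,\ x_0x_1^2-x_2^3\ge0,\ x_0>0\}$, $\tilde S^{c}=\{(x_0,x_1,x_2):x_1\ge0,\ x_0x_1^2-x_2^3\ge0,\ x_0\ge0\}$. Then $\overline{\tilde S^{o}}=\tilde S^{c}$ (so $S$ is closed at $\infty$), the linear form $2X_0+2X_1-3X_2$ is positive on $\mathrm{conv}(\overline{\tilde S^{o}})\setminus\{0\}$ (so $\mathrm{conv}(\overline{\tilde S^{o}})$ is closed and pointed), and consequently, with $\tilde G=\{X_1,X_0X_1^2-X_2^3,X_0,X_0^2+X_1^2+X_2^2-1,1-X_0^2-X_1^2-X_2^2\}$, $\overline{\mathrm{conv}(S)}=\bigcap_{k\ge1}\widetilde{\mathrm{TH}}_k(\tilde G)$.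
   Context: For a finite set $H$ of polynomials, $\mathcal{Q}_k(H)=\{\sum_{j}\sigma_jh_j:h_0=1,\ \sigma_j\text{ sums of squares},\ \deg(\sigma_jh_j)\le2k\}$. $\widetilde{\mathrm{TH}}_k(\tilde G)=\{(x_1,x_2):\tilde l(1,x_1,x_2)\ge0\ \forall\tilde l\in\mathcal{Q}_k(\tilde G)\text{ that is a linear form in }(X_0,X_1,X_2)\text{ or }0\}$. A closed convex cone $K$ is pointed if $K\cap(-K)=\{0\}$. *)

theory Defs
  imports "HOL-Analysis.Analysis" "HOL-Library.Poly_Mapping" "HOL-Library.Product_Plus"
begin

text \<open>A monomial
 X0^a * X1^b * X2^c is represented by its exponent triple (a,b,c); a polynomial
 is a finitely supported map from exponent triples to real coefficients.
 Multiplication is the convolution product of Poly_Mapping.\<close>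

type_synonym poly3 = "(nat \<times> nat \<times> nat) \<Rightarrow>\<^sub>0 real"

definition X0 :: poly3 where "X0 = Poly_Mapping.single (1,0,0) 1"
definition X1 :: poly3 where "X1 = Poly_Mapping.single (0,1,0) 1"
definition X2 :: poly3 where "X2 = Poly_Mapping.single (0,0,1) 1"

definition mdeg :: "nat \<times> nat \<times> nat \<Rightarrow> nat" where
  "mdeg m = (case m of (a,b,c) \<Rightarrow> a + b + c)"

text \<open>Total degree (the zero polynomial gets degree 0).\<close>
definition pdeg :: "poly3 \<Rightarrow> nat" where
  "pdeg p = Max (insert 0 (mdeg ` Poly_Mapping.keys p))"

definition peval :: "poly3 \<Rightarrow> real \<times> real \<times> real \<Rightarrow> real" where
  "peval p x = (case x of (x0,x1,x2) \<Rightarrow>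
     (\<Sum>m\<in>Poly_Mapping.keys p. case m of (a,b,c) \<Rightarrow>
        Poly_Mapping.lookup p m * x0^a * x1^b * x2^c))"

definition is_sos :: "poly3 \<Rightarrow> bool" where
  "is_sos \<sigma> \<longleftrightarrow> (\<exists>qs. \<sigma> = sum_list (map (\<lambda>q. q * q) qs))"

definition quadmod :: "nat \<Rightarrow> poly3 set \<Rightarrow> poly3 set" where
  "quadmod k H = {p. \<exists>\<sigma>0 \<sigma>. is_sos \<sigma>0 \<and> pdeg \<sigma>0 \<le> 2*k \<and>
      (\<forall>h\<in>H. is_sos (\<sigma> h) \<and> pdeg (\<sigma> h * h) \<le> 2*k) \<and>
      p = \<sigma>0 + (\<Sum>h\<in>H. \<sigma> h * h)}"

text \<open>Linear forms in X0,X1,X2 (homogeneous of degree 1), including 0.\<close>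
definition is_linform :: "poly3 \<Rightarrow> bool" where
  "is_linform l \<longleftrightarrow> (\<forall>m\<in>Poly_Mapping.keys l. mdeg m = 1)"

definition THk :: "nat \<Rightarrow> poly3 set \<Rightarrow> (real \<times> real) set" where
  "THk k G = {(x1,x2). \<forall>l\<in>quadmod k G. is_linform l \<longrightarrow> peval l (1,x1,x2) \<ge> 0}"

definition S :: "(real \<times> real) set" where
  "S = {(x1,x2). x1 \<ge> 0 \<and> x1^2 - x2^3 \<ge> 0}"

definition St_open :: "(real \<times> real \<times> real) set" where
  "St_open = {(x0,x1,x2). x1 \<ge> 0 \<and> x0 * x1^2 - x2^3 \<ge> 0 \<and> x0 > 0}"

definition St_closed :: "(real \<times> real \<times> real) set" where
  "St_closed = {(x0,x1,x2). x1 \<ge> 0 \<and> x0 * x1^2 - x2^3 \<ge> 0 \<and> x0 \<ge> 0}"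

definition Gt :: "poly3 set" where
  "Gt = {X1, X0 * X1^2 - X2^3, X0, X0^2 + X1^2 + X2^2 - 1, 1 - X0^2 - X1^2 - X2^2}"

end

theory Submission
  imports Defs
begin

text \<open>By AM-GM, the cone St_closed is cut out by x0 \<ge> 0, x1 \<ge> 0 and the tangent half-spaces
  t^3 x0 + 2 x1 - 3 t x2 \<ge> 0 (t > 0). This makes it closed and convex, it is the closure of
  St_open, and t = 1 gives the positivity of 2 x0 + 2 x1 - 3 x2 away from 0, hence pointedness.

  Every truncated moment relaxation contains S, since S lifts to the part of St_closed on the unit
  sphere, where all of Gt is nonnegative. Conversely, a point of the plane outside S violates some
  tangent form l, and l plus any small positive multiple of 5 X0 + 5 X1 - X2 lies in the quadratic
  module of Gt. Indeed l * Q has an explicit certificate for a sum of squares Q with l^2 \<le> 2 Q, and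
  an Archimedean argument on the sphere turns it into a certificate for l + \<theta>, \<theta> > 0; the
  constant \<theta> is then traded for a multiple of 5 X0 + 5 X1 - X2 - 1/8, which has a certificate
  of its own.\<close>

definition mono_eval :: "nat \<times> nat \<times> nat \<Rightarrow> real \<times> real \<times> real \<Rightarrow> real" where
  "mono_eval m x = (case m of (a,b,c) \<Rightarrow> (case x of (x0,x1,x2) \<Rightarrow> x0^a * x1^b * x2^c))"

lemma mono_eval_zero [simp]: "mono_eval 0 x = 1"
  by (cases x) (simp add: mono_eval_def zero_prod_def)

lemma mono_eval_add: "mono_eval (a + b) x = mono_eval a x * mono_eval b x"
  unfolding mono_eval_def by (cases a; cases b; cases x) (simp add: power_add)

lemma peval_eq_sum_mono_eval:
  "peval p x = (\<Sum>m\<in>Poly_Mapping.keys p. Poly_Mapping.lookup p m * mono_eval m x)"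
  unfolding peval_def mono_eval_def
  by (cases x) (auto intro!: sum.cong split: prod.splits)

lemma peval_eq_sum_mono_eval_superset:
  assumes "finite A" "Poly_Mapping.keys p \<subseteq> A"
  shows "peval p x = (\<Sum>m\<in>A. Poly_Mapping.lookup p m * mono_eval m x)"
  unfolding peval_eq_sum_mono_eval
  by (rule sum.mono_neutral_left[OF assms]) (auto simp: in_keys_iff)

lemma peval_zero [simp]: "peval 0 x = 0"
  unfolding peval_eq_sum_mono_eval by simp

lemma peval_single: "peval (Poly_Mapping.single m c) x = c * mono_eval m x"
  unfolding peval_eq_sum_mono_eval by simp

lemma peval_one [simp]: "peval 1 x = 1"
  using peval_single[of 0 1 x] by simp

lemma peval_add: "peval (p + q) x = peval p x + peval q x"
proof -
  let ?A = "Poly_Mapping.keys p \<union> Poly_Mapping.keys q"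
  have "peval (p + q) x = (\<Sum>m\<in>?A. Poly_Mapping.lookup (p + q) m * mono_eval m x)"
    using keys_add[of p q] by (intro peval_eq_sum_mono_eval_superset) auto
  also have "\<dots> = (\<Sum>m\<in>?A. Poly_Mapping.lookup p m * mono_eval m x)
      + (\<Sum>m\<in>?A. Poly_Mapping.lookup q m * mono_eval m x)"
    by (simp add: lookup_add algebra_simps sum.distrib)
  also have "\<dots> = peval p x + peval q x"
    by (simp add: peval_eq_sum_mono_eval_superset[of ?A, symmetric])
  finally show ?thesis .
qed

lemma peval_uminus: "peval (- p) x = - peval p x"
  unfolding peval_eq_sum_mono_eval by (simp add: sum_negf)

lemma peval_diff: "peval (p - q) x = peval p x - peval q x"
  using peval_add[of p "- q" x] by (simp add: peval_uminus)

lemma peval_sum: "peval (\<Sum>i\<in>I. f i) x = (\<Sum>i\<in>I. peval (f i) x)"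
  by (induction I rule: infinite_finite_induct) (auto simp: peval_add)

lemma poly_mapping_eq_sum_single:
  "p = (\<Sum>m\<in>Poly_Mapping.keys p. Poly_Mapping.single m (Poly_Mapping.lookup p m))"
  by (rule poly_mapping_eqI) (simp add: lookup_sum lookup_single when_def in_keys_iff)

lemma peval_mult: "peval (p * q) x = peval p x * peval q x"
proof -
  have "p * q = (\<Sum>a\<in>Poly_Mapping.keys p. \<Sum>b\<in>Poly_Mapping.keys q.
      Poly_Mapping.single a (Poly_Mapping.lookup p a) * Poly_Mapping.single b (Poly_Mapping.lookup q b))"
    by (subst poly_mapping_eq_sum_single[of p], subst poly_mapping_eq_sum_single[of q])
      (simp add: sum_product)
  then have "peval (p * q) x = (\<Sum>a\<in>Poly_Mapping.keys p. \<Sum>b\<in>Poly_Mapping.keys q.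
      (Poly_Mapping.lookup p a * mono_eval a x) * (Poly_Mapping.lookup q b * mono_eval b x))"
    by (simp add: peval_sum mult_single peval_single mono_eval_add mult_ac)
  also have "\<dots> = peval p x * peval q x"
    by (simp add: peval_eq_sum_mono_eval sum_product)
  finally show ?thesis .
qed

lemma peval_power: "peval (p ^ n) x = peval p x ^ n"
  by (induction n) (auto simp: peval_mult)

lemma peval_X0 [simp]: "peval X0 (a,b,c) = a"
  and peval_X1 [simp]: "peval X1 (a,b,c) = b"
  and peval_X2 [simp]: "peval X2 (a,b,c) = c"
  by (simp_all add: X0_def X1_def X2_def peval_single mono_eval_def)

lemmas peval_simps = peval_add peval_diff peval_uminus peval_mult peval_power

definition pconst :: "real \<Rightarrow> poly3" where
  "pconst c = Poly_Mapping.single 0 c"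

lemma peval_pconst [simp]: "peval (pconst c) x = c"
  by (simp add: pconst_def peval_single)

lemma peval_numeral [simp]: "peval (numeral n) x = numeral n"
  using peval_pconst[of "numeral n" x] by (simp add: pconst_def)

lemma pconst_one [simp]: "pconst 1 = 1"
  by (simp add: pconst_def)

lemma pconst_mult: "pconst a * pconst b = pconst (a * b)"
  by (simp add: pconst_def mult_single)

lemma pconst_add: "pconst (a + b) = pconst a + pconst b"
  by (simp add: pconst_def single_add)

lemma pconst_diff: "pconst (a - b) = pconst a - pconst b"
  by (simp add: pconst_def single_diff)

lemma pconst_of_nat: "pconst (of_nat n) = of_nat n"
  and pconst_numeral: "pconst (numeral w) = numeral w"
  by (simp_all add: pconst_def)

lemma is_sos_zero [simp]: "is_sos 0"
  unfolding is_sos_def by (rule exI[of _ "[]"]) simp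

lemma is_sos_square: "is_sos (q * q)"
  unfolding is_sos_def by (rule exI[of _ "[q]"]) simp

lemma is_sos_one: "is_sos 1"
  using is_sos_square[of 1] by simp

lemma is_sos_add: "is_sos a \<Longrightarrow> is_sos b \<Longrightarrow> is_sos (a + b)"
proof -
  assume "is_sos a" "is_sos b"
  then obtain qs rs where "a = sum_list (map (\<lambda>q. q * q) qs)" "b = sum_list (map (\<lambda>q. q * q) rs)"
    unfolding is_sos_def by blast
  then have "a + b = sum_list (map (\<lambda>q. q * q) (qs @ rs))" by simp
  then show ?thesis unfolding is_sos_def by blast
qed

lemma is_sos_square_mult: "is_sos b \<Longrightarrow> is_sos (q * q * b)"
proof -
  assume "is_sos b"
  then obtain rs where b: "b = sum_list (map (\<lambda>q. q * q) rs)" unfolding is_sos_def by blast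
  have "q * q * b = sum_list (map (\<lambda>r. r * r) (map (\<lambda>r. q * r) rs))"
    unfolding b by (induction rs) (simp_all add: algebra_simps)
  then show ?thesis unfolding is_sos_def by blast
qed

lemma is_sos_mult: "is_sos a \<Longrightarrow> is_sos b \<Longrightarrow> is_sos (a * b)"
proof -
  assume "is_sos a" "is_sos b"
  then obtain qs where "a = sum_list (map (\<lambda>q. q * q) qs)" unfolding is_sos_def by blast
  moreover have "is_sos (sum_list (map (\<lambda>q. q * q) qs) * b)"
    by (induction qs) (simp_all add: distrib_right is_sos_add is_sos_square_mult \<open>is_sos b\<close>)
  ultimately show ?thesis by simp
qed

lemma is_sos_pconst: "c \<ge> 0 \<Longrightarrow> is_sos (pconst c)"
  using is_sos_square[of "pconst (sqrt c)"] by (simp add: pconst_mult)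

lemma peval_sos_nonneg: "is_sos s \<Longrightarrow> peval s x \<ge> 0"
proof -
  assume "is_sos s"
  then obtain qs where "s = sum_list (map (\<lambda>q. q * q) qs)" unfolding is_sos_def by blast
  then show ?thesis by (induction qs arbitrary: s) (auto simp: peval_add peval_mult)
qed

section \<open>The quadratic module of Gt\<close>

definition sph :: poly3 where "sph = X0^2 + X1^2 + X2^2"

definition cusp :: poly3 where "cusp = X0 * X1^2 - X2^3"

text \<open>Since Gt contains both sph - 1 and 1 - sph, the quadratic module it generates (without degree
  bounds) is qm_sph; sos_sph consists of the sums of squares modulo the ideal of the unit sphere.\<close>

definition sos_sph :: "poly3 set" where
  "sos_sph = {p. \<exists>s q. is_sos s \<and> p = s + (sph - 1) * q}"

definition qm_sph :: "poly3 set" where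
  "qm_sph = {p. \<exists>s0 s1 s2 s3 q. is_sos s0 \<and> is_sos s1 \<and> is_sos s2 \<and> is_sos s3 \<and>
     p = s0 + X1 * s1 + cusp * s2 + X0 * s3 + (sph - 1) * q}"

lemma sos_sphI: "is_sos s \<Longrightarrow> p = s + (sph - 1) * q \<Longrightarrow> p \<in> sos_sph"
  unfolding sos_sph_def by blast

lemma sos_sphE:
  assumes "p \<in> sos_sph"
  obtains s q where "is_sos s" "p = s + (sph - 1) * q"
  using assms unfolding sos_sph_def by blast

lemma qm_sphI:
  "is_sos s0 \<Longrightarrow> is_sos s1 \<Longrightarrow> is_sos s2 \<Longrightarrow> is_sos s3 \<Longrightarrow>
   p = s0 + X1 * s1 + cusp * s2 + X0 * s3 + (sph - 1) * q \<Longrightarrow> p \<in> qm_sph"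
  unfolding qm_sph_def by blast

lemma qm_sphE:
  assumes "p \<in> qm_sph"
  obtains s0 s1 s2 s3 q where "is_sos s0" "is_sos s1" "is_sos s2" "is_sos s3"
    "p = s0 + X1 * s1 + cusp * s2 + X0 * s3 + (sph - 1) * q"
  using assms unfolding qm_sph_def by blast

lemma sos_sph_sos: "is_sos s \<Longrightarrow> s \<in> sos_sph"
  by (rule sos_sphI[of s _ 0]) auto

lemma sos_sph_square: "q * q \<in> sos_sph"
  by (rule sos_sph_sos[OF is_sos_square])

lemma sos_sph_pconst: "c \<ge> 0 \<Longrightarrow> pconst c \<in> sos_sph"
  by (rule sos_sph_sos[OF is_sos_pconst])

lemma sos_sph_one: "1 \<in> sos_sph"
  by (rule sos_sph_sos[OF is_sos_one])

lemma sos_sph_of_nat: "of_nat n \<in> sos_sph"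
  using sos_sph_pconst[of "of_nat n"] by (simp add: pconst_of_nat)

lemma sos_sph_numeral: "numeral n \<in> sos_sph"
  using sos_sph_pconst[of "numeral n"] by (simp add: pconst_numeral)

lemma sos_sph_add: "a \<in> sos_sph \<Longrightarrow> b \<in> sos_sph \<Longrightarrow> a + b \<in> sos_sph"
proof -
  assume "a \<in> sos_sph" "b \<in> sos_sph"
  then obtain s q s' q' where "is_sos s" "is_sos s'"
    and a: "a = s + (sph - 1) * q" and b: "b = s' + (sph - 1) * q'"
    by (metis sos_sphE)
  then show ?thesis unfolding a b
    by (intro sos_sphI[of "s + s'" _ "q + q'"]) (auto simp: algebra_simps is_sos_add)
qed

lemma sos_sph_mult: "a \<in> sos_sph \<Longrightarrow> b \<in> sos_sph \<Longrightarrow> a * b \<in> sos_sph"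
proof -
  assume "a \<in> sos_sph" "b \<in> sos_sph"
  then obtain s q s' q' where "is_sos s" "is_sos s'"
    and a: "a = s + (sph - 1) * q" and b: "b = s' + (sph - 1) * q'"
    by (metis sos_sphE)
  then show ?thesis unfolding a b
    by (intro sos_sphI[of "s * s'" _ "q * s' + s * q' + q * q' * (sph - 1)"])
      (auto simp: algebra_simps is_sos_mult)
qed

lemma sos_sph_power: "a \<in> sos_sph \<Longrightarrow> a ^ n \<in> sos_sph"
  by (induction n) (auto simp: sos_sph_one sos_sph_mult)

lemma sos_sph_sum: "(\<And>i. i \<in> I \<Longrightarrow> f i \<in> sos_sph) \<Longrightarrow> (\<Sum>i\<in>I. f i) \<in> sos_sph"
  by (induction I rule: infinite_finite_induct) (auto simp: sos_sph_add sos_sph_sos)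

lemma sos_sph_add_ideal: "a \<in> sos_sph \<Longrightarrow> a + (sph - 1) * q \<in> sos_sph"
  using sos_sph_add[OF _ sos_sphI[of 0 _ q]] by simp

lemma sos_sph_cancel_pconst:
  assumes "pconst c * a \<in> sos_sph" "c > 0"
  shows "a \<in> sos_sph"
proof -
  have "pconst (1 / c) * (pconst c * a) \<in> sos_sph"
    using sos_sph_mult[OF sos_sph_pconst[of "1 / c"] assms(1)] assms(2) by simp
  moreover have "pconst (1 / c) * (pconst c * a) = a"
    using assms(2) by (simp add: mult.assoc[symmetric] pconst_mult)
  ultimately show ?thesis by simp
qed

lemma qm_sph_add: "a \<in> qm_sph \<Longrightarrow> b \<in> qm_sph \<Longrightarrow> a + b \<in> qm_sph"
proof -
  assume "a \<in> qm_sph" "b \<in> qm_sph"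
  then obtain s0 s1 s2 s3 q t0 t1 t2 t3 r where
    "is_sos s0" "is_sos s1" "is_sos s2" "is_sos s3"
    "a = s0 + X1 * s1 + cusp * s2 + X0 * s3 + (sph - 1) * q"
    "is_sos t0" "is_sos t1" "is_sos t2" "is_sos t3"
    "b = t0 + X1 * t1 + cusp * t2 + X0 * t3 + (sph - 1) * r"
    by (metis qm_sphE)
  then show ?thesis
    by (intro qm_sphI[of "s0 + t0" "s1 + t1" "s2 + t2" "s3 + t3" _ "q + r"])
      (auto simp: algebra_simps is_sos_add)
qed

lemma qm_sph_mult_sos_sph: "a \<in> qm_sph \<Longrightarrow> b \<in> sos_sph \<Longrightarrow> a * b \<in> qm_sph"
proof -
  assume "a \<in> qm_sph" "b \<in> sos_sph"
  then obtain s0 s1 s2 s3 q s r where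
    "is_sos s0" "is_sos s1" "is_sos s2" "is_sos s3" "is_sos s"
    and a: "a = s0 + X1 * s1 + cusp * s2 + X0 * s3 + (sph - 1) * q"
    and b: "b = s + (sph - 1) * r"
    by (metis qm_sphE sos_sphE)
  moreover have "a * b = s0 * s + X1 * (s1 * s) + cusp * (s2 * s) + X0 * (s3 * s)
      + (sph - 1) * (q * s + q * r * (sph - 1) + r * (s0 + X1 * s1 + cusp * s2 + X0 * s3))"
    unfolding a b by (simp add: algebra_simps)
  ultimately show ?thesis
    by (intro qm_sphI) (auto simp: is_sos_mult)
qed

lemma sos_sph_subset_qm_sph: "a \<in> sos_sph \<Longrightarrow> a \<in> qm_sph"
  by (erule sos_sphE) (rule qm_sphI[of _ 0 0 0], auto)

lemma qm_sph_X0: "X0 \<in> qm_sph"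
  and qm_sph_X1: "X1 \<in> qm_sph"
  and qm_sph_cusp: "cusp \<in> qm_sph"
  by (rule qm_sphI[of 0 0 0 1 _ 0] qm_sphI[of 0 1 0 0 _ 0] qm_sphI[of 0 0 1 0 _ 0];
      auto simp: is_sos_one)+

lemma qm_sph_cancel_pconst:
  assumes "pconst c * a \<in> qm_sph" "c > 0"
  shows "a \<in> qm_sph"
proof -
  have "(pconst c * a) * pconst (1 / c) \<in> qm_sph"
    using qm_sph_mult_sos_sph[OF assms(1) sos_sph_pconst[of "1 / c"]] assms(2) by simp
  moreover have "(pconst c * a) * pconst (1 / c) = a * (pconst c * pconst (1 / c))"
    by (simp only: ac_simps)
  then have "(pconst c * a) * pconst (1 / c) = a"
    using assms(2) by (simp add: pconst_mult)
  ultimately show ?thesis by simp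
qed

section \<open>An Archimedean argument on the sphere\<close>

lemma sos_sph_bernoulli:
  assumes "u \<in> sos_sph" "1 - u \<in> sos_sph"
  shows "1 - of_nat (Suc N) * (1 - u) * u^N - u^Suc N \<in> sos_sph"
proof (induction N)
  case 0
  show ?case by (simp add: sos_sph_sos)
next
  case (Suc N)
  have "1 - of_nat (Suc (Suc N)) * (1 - u) * u^Suc N - u^Suc (Suc N) =
      (1 - of_nat (Suc N) * (1 - u) * u^N - u^Suc N) + of_nat (Suc N) * ((1 - u) * (1 - u)) * u^N"
    by (simp add: algebra_simps)
  then show ?case
    by (metis Suc assms sos_sph_add sos_sph_mult sos_sph_of_nat sos_sph_square sos_sph_power)
qed

lemma archimedean_identity:
  fixes C Q U T K n l :: "'a::comm_ring_1"
  shows "2*T*C*n*(l*U + T) = n*C*((l + T)*(l + T))*U + n*C*(K*Q - l*l)*U + K*(1 - n*(C*Q)*U)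
    + T*T*C*n*(1 - U) + (T*T*C*n - K)"
  by (simp add: algebra_simps)

lemma sos_sph_mult_power_add_pconst:
  assumes u: "u \<in> sos_sph" and Q: "Q \<in> sos_sph" and uQ: "1 - u = pconst c * Q"
    and l: "pconst k * Q - l * l \<in> sos_sph"
    and "c > 0" "k \<ge> 0" "\<theta> > 0" and N: "k \<le> \<theta>^2 * c * real (Suc N)"
  shows "l * u^N + pconst \<theta> \<in> sos_sph"
proof -
  define n :: poly3 where "n = of_nat (Suc N)"
  have n: "n \<in> sos_sph" "pconst (real (Suc N)) = n"
    unfolding n_def by (rule sos_sph_of_nat, rule pconst_of_nat)
  have one_minus_u: "1 - u \<in> sos_sph"
    unfolding uQ using \<open>c > 0\<close> by (intro sos_sph_mult sos_sph_pconst Q) simp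
  then have "1 - of_nat (Suc N) * (1 - u) * u^N \<in> sos_sph"
    using sos_sph_add[OF sos_sph_bernoulli[OF u one_minus_u, of N] sos_sph_power[OF u, of "Suc N"]] by simp
  then have "1 - n * (pconst c * Q) * u^N \<in> sos_sph"
    unfolding n_def uQ .
  moreover have "1 - u^N \<in> sos_sph"
    unfolding one_diff_power_eq using one_minus_u
    by (intro sos_sph_mult sos_sph_sum sos_sph_power u)
  moreover have "pconst (\<theta> * \<theta> * c * real (Suc N) - k) \<in> sos_sph"
    using N by (intro sos_sph_pconst) (simp add: power2_eq_square)
  ultimately have "n * pconst c * ((l + pconst \<theta>) * (l + pconst \<theta>)) * u^N
      + n * pconst c * (pconst k * Q - l * l) * u^N + pconst k * (1 - n * (pconst c * Q) * u^N)
      + pconst \<theta> * pconst \<theta> * pconst c * n * (1 - u^N)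
      + (pconst \<theta> * pconst \<theta> * pconst c * n - pconst k) \<in> sos_sph" (is "?certificate \<in> _")
    using \<open>c > 0\<close> \<open>k \<ge> 0\<close> \<open>\<theta> > 0\<close>
    by (intro sos_sph_add sos_sph_mult sos_sph_pconst sos_sph_square sos_sph_power u l n)
      (simp_all add: pconst_diff pconst_mult n(2)[symmetric])
  moreover have "pconst (2 * \<theta> * c * real (Suc N)) * (l * u^N + pconst \<theta>) = ?certificate"
  proof -
    have "pconst (2 * \<theta> * c * real (Suc N)) = 2 * pconst \<theta> * pconst c * n"
      by (simp only: pconst_mult[symmetric] pconst_numeral[symmetric] n(2)[symmetric])
    then show ?thesis by (simp only: archimedean_identity)
  qed
  ultimately have "pconst (2 * \<theta> * c * real (Suc N)) * (l * u^N + pconst \<theta>) \<in> sos_sph"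
    by simp
  then show ?thesis
    by (rule sos_sph_cancel_pconst) (use \<open>c > 0\<close> \<open>\<theta> > 0\<close> in simp)
qed

text \<open>Modulo the sphere, u = 1 - Q / c1 lies between 0 and 1. The factor u^N is small where Q is
  not, while l^2 \<le> k Q makes l small where Q is, so l u^N + \<theta> is a sum of squares for large N;
  and l (1 - u^N) is a multiple of l Q.\<close>

lemma qm_sph_add_pos_pconst:
  assumes lQ: "l * Q \<in> qm_sph" and Q: "Q \<in> sos_sph" and Q_le: "pconst c1 * sph - Q \<in> sos_sph"
    and l_le: "pconst k * Q - l * l \<in> sos_sph" and "c1 > 0" "k \<ge> 0" "\<theta> > 0"
  shows "l + pconst \<theta> \<in> qm_sph"
proof -
  define c where "c = 1 / c1"
  define u where "u = 1 - pconst c * Q"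
  have c: "c > 0" using \<open>c1 > 0\<close> by (simp add: c_def)
  have "u = pconst c * (pconst c1 * sph - Q) + (sph - 1) * (- 1)"
    using \<open>c1 > 0\<close> by (simp add: u_def c_def algebra_simps pconst_mult)
  then have u: "u \<in> sos_sph"
    using c by (metis sos_sph_add_ideal sos_sph_mult sos_sph_pconst Q_le less_imp_le)
  obtain N :: nat where "k / (\<theta>^2 * c) < real N"
    using reals_Archimedean2 by blast
  then have "k < \<theta>^2 * c * real N"
    using c \<open>\<theta> > 0\<close> by (simp add: field_simps)
  moreover have "\<theta>^2 * c * real N \<le> \<theta>^2 * c * real (Suc N)"
    using c by (intro mult_left_mono) auto
  ultimately have N: "k \<le> \<theta>^2 * c * real (Suc N)" by linarith
  have "l * (1 - u^N) = (l * Q) * (pconst c * (\<Sum>i<N. u^i))"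
    unfolding one_diff_power_eq by (simp add: u_def ac_simps)
  then have "l * (1 - u^N) \<in> qm_sph"
    using c by (metis lQ qm_sph_mult_sos_sph sos_sph_mult sos_sph_pconst sos_sph_sum
        sos_sph_power u less_imp_le)
  moreover have "l * u^N + pconst \<theta> \<in> sos_sph"
    by (rule sos_sph_mult_power_add_pconst[OF u Q _ l_le c \<open>k \<ge> 0\<close> \<open>\<theta> > 0\<close> N])
      (simp add: u_def)
  ultimately have "l * (1 - u^N) + (l * u^N + pconst \<theta>) \<in> qm_sph"
    by (blast intro: qm_sph_add sos_sph_subset_qm_sph)
  then show ?thesis by (simp add: algebra_simps)
qed

lemma sos_sph_half: "2 * a \<in> sos_sph \<Longrightarrow> a \<in> sos_sph"
  by (rule sos_sph_cancel_pconst[of 2]) (simp_all add: pconst_numeral)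

lemma sos_sph_three_squares_add_ideal: "a * a + b * b + c * c + (sph - 1) * q \<in> sos_sph"
  by (intro sos_sph_add_ideal sos_sph_add sos_sph_square)

lemma sos_sph_coordinate_bounds:
  "1 - X0 \<in> sos_sph" "1 - X1 \<in> sos_sph" "1 - X2 \<in> sos_sph" "1 + X2 \<in> sos_sph"
proof -
  have "2 * (1 - X0) = (1 - X0) * (1 - X0) + X1 * X1 + X2 * X2 + (sph - 1) * (- 1)"
    "2 * (1 - X1) = (1 - X1) * (1 - X1) + X0 * X0 + X2 * X2 + (sph - 1) * (- 1)"
    "2 * (1 - X2) = (1 - X2) * (1 - X2) + X0 * X0 + X1 * X1 + (sph - 1) * (- 1)"
    "2 * (1 + X2) = (1 + X2) * (1 + X2) + X0 * X0 + X1 * X1 + (sph - 1) * (- 1)"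
    by (simp_all add: sph_def algebra_simps power2_eq_square)
  then show "1 - X0 \<in> sos_sph" "1 - X1 \<in> sos_sph" "1 - X2 \<in> sos_sph" "1 + X2 \<in> sos_sph"
    by (metis sos_sph_half sos_sph_three_squares_add_ideal)+
qed

lemma sos_sph_X1_bound: "4 - (1 + X2) * (1 + X2) * (X1 * X1) \<in> sos_sph"
proof -
  have "4 - (1 + X2) * (1 + X2) * (X1 * X1) = (1 - X2) * (2 + (1 + X2))
      + (1 + X2) * (1 + X2) * (X0 * X0 + X2 * X2) + (sph - 1) * (- ((1 + X2) * (1 + X2)))"
    by (simp add: sph_def algebra_simps power2_eq_square)
  then show ?thesis
    using sos_sph_coordinate_bounds
    by (metis sos_sph_add sos_sph_add_ideal sos_sph_mult sos_sph_numeral sos_sph_square)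
qed

lemma sos_sph_quartic: "24 * X2^4 + 24 * X2^3 - 24 * X2 + 9 \<in> sos_sph"
proof -
  have "24 * X2^4 + 24 * X2^3 - 24 * X2 + 9
      = 6 * ((2 * X2 * X2 + X2 - 1) * (2 * X2 * X2 + X2 - 1)) + 2 * ((3 * X2 - 1) * (3 * X2 - 1)) + 1"
    by (simp add: algebra_simps power2_eq_square power3_eq_cube power4_eq_xxxx)
  then show ?thesis
    by (metis sos_sph_add sos_sph_mult sos_sph_numeral sos_sph_square sos_sph_one)
qed

lemma qm_sph_interior_form: "5 * X0 + 5 * X1 - X2 - pconst (1 / 8) \<in> qm_sph"
proof -
  have "cusp * (192 * ((1 + X2) * (1 + X2))) \<in> qm_sph"
    by (rule qm_sph_mult_sos_sph[OF qm_sph_cusp sos_sph_mult[OF sos_sph_numeral sos_sph_square]])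
  moreover have "X0 * (192 * (4 - (1 + X2) * (1 + X2) * (X1 * X1))) \<in> qm_sph"
    by (rule qm_sph_mult_sos_sph[OF qm_sph_X0 sos_sph_mult[OF sos_sph_numeral sos_sph_X1_bound]])
  moreover have "X0 * (192 * (1 - X0)) \<in> qm_sph"
    using sos_sph_coordinate_bounds by (intro qm_sph_mult_sos_sph qm_sph_X0 sos_sph_mult sos_sph_numeral)
  moreover have "X1 * (960 * (1 - X1)) \<in> qm_sph"
    using sos_sph_coordinate_bounds by (intro qm_sph_mult_sos_sph qm_sph_X1 sos_sph_mult sos_sph_numeral)
  moreover have "768 * (X1 * X1) + 8 * (1 + X2) * (24 * X2^4 + 24 * X2^3 - 24 * X2 + 9)
      + 72 * (1 - X2) + 24 + (sph - 1) * 192 \<in> sos_sph"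
    using sos_sph_quartic sos_sph_coordinate_bounds
    by (intro sos_sph_add_ideal sos_sph_add[OF sos_sph_add[OF sos_sph_add]] sos_sph_mult
        sos_sph_numeral sos_sph_square)
  ultimately have certificate: "cusp * (192 * ((1 + X2) * (1 + X2))) + X0 * (192 * (4 - (1 + X2) * (1 + X2) * (X1 * X1)))
      + X0 * (192 * (1 - X0)) + X1 * (960 * (1 - X1))
      + (768 * (X1 * X1) + 8 * (1 + X2) * (24 * X2^4 + 24 * X2^3 - 24 * X2 + 9) + 72 * (1 - X2) + 24
         + (sph - 1) * 192) \<in> qm_sph" (is "?certificate \<in> _")
    by (blast intro: qm_sph_add sos_sph_subset_qm_sph)
  have "?certificate = 192 * (5 * X0 + 5 * X1 - X2) - 24"
    by (simp add: cusp_def sph_def algebra_simps power2_eq_square power3_eq_cube power4_eq_xxxx)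
  also have "\<dots> = pconst 192 * (5 * X0 + 5 * X1 - X2 - pconst (1 / 8))"
    by (simp add: right_diff_distrib pconst_mult pconst_numeral[symmetric])
  finally show ?thesis
    using certificate qm_sph_cancel_pconst[of 192] by simp
qed

definition tangent_form :: "real \<Rightarrow> poly3" where
  "tangent_form t = pconst (t^3) * X0 + 2 * X1 - pconst (3 * t) * X2"

lemma peval_tangent_form [simp]:
  "peval (tangent_form t) (x0, x1, x2) = t^3 * x0 + 2 * x1 - 3 * t * x2"
  by (simp add: tangent_form_def peval_simps)

lemma qm_sph_tangent_form_add_pconst:
  assumes "t > 0" "\<theta> > 0"
  shows "tangent_form t + pconst \<theta> \<in> qm_sph"
proof -
  define a where "a = pconst (t^3)"
  define b where "b = pconst (3 * t)"
  define l where "l = a * X0 + 2 * X1 - b * X2"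
  define Q where "Q = (a * X0 + 2 * X1 + b * X2) * (a * X0 + 2 * X1 + b * X2)
    + (a * X0 + 2 * X1) * (a * X0 + 2 * X1) + (b * X2) * (b * X2)"
  have a: "a \<in> sos_sph"
    unfolding a_def using \<open>t > 0\<close> by (intro sos_sph_pconst) simp
  have "l * Q = X0 * (2 * a * ((a * X0 - X1) * (a * X0 - X1)))
      + X1 * (16 * ((a * X0 - X1) * (a * X0 - X1))) + cusp * (54 * a) + 2 * X2^3 * (27 * a - b * b * b)"
    unfolding l_def Q_def cusp_def
    by (simp add: algebra_simps power2_eq_square power3_eq_cube)
  moreover have "27 * a - b * b * b = 0"
    unfolding a_def b_def
    by (simp add: pconst_mult pconst_numeral[symmetric] pconst_diff[symmetric] power3_eq_cube mult.assoc)
  ultimately have "l * Q = X0 * (2 * a * ((a * X0 - X1) * (a * X0 - X1)))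
      + X1 * (16 * ((a * X0 - X1) * (a * X0 - X1))) + cusp * (54 * a)"
    by simp
  then have lQ: "l * Q \<in> qm_sph"
    using a by (metis qm_sph_add qm_sph_mult_sos_sph qm_sph_X0 qm_sph_X1 qm_sph_cusp sos_sph_mult
        sos_sph_numeral sos_sph_square)
  have Q: "Q \<in> sos_sph"
    unfolding Q_def by (intro sos_sph_add sos_sph_square)
  have "pconst (3 * ((t^3)^2 + 4 + (3 * t)^2)) = 3 * (a * a + 4 + b * b)"
    unfolding a_def b_def pconst_numeral[symmetric]
    by (simp only: pconst_mult pconst_add[symmetric] power2_eq_square)
  moreover have "3 * (a * a + 4 + b * b) * sph - Q
      = l * l + 3 * ((2 * X0 - a * X1) * (2 * X0 - a * X1)) + 3 * (a * a + 4) * (X2 * X2)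
        + 3 * (b * b) * (X0 * X0 + X1 * X1)"
    unfolding l_def Q_def sph_def by (simp add: algebra_simps power2_eq_square)
  ultimately have Q_le: "pconst (3 * ((t^3)^2 + 4 + (3 * t)^2)) * sph - Q \<in> sos_sph"
    by (metis sos_sph_add sos_sph_mult sos_sph_numeral sos_sph_square)
  have "pconst 2 * Q - l * l = 3 * ((a * X0 + 2 * X1 + b * X2) * (a * X0 + 2 * X1 + b * X2))"
    unfolding l_def Q_def by (simp add: algebra_simps pconst_numeral)
  then have l_le: "pconst 2 * Q - l * l \<in> sos_sph"
    by (metis sos_sph_mult sos_sph_numeral sos_sph_square)
  have "l + pconst \<theta> \<in> qm_sph"
    by (rule qm_sph_add_pos_pconst[OF lQ Q Q_le l_le]) (use assms in \<open>auto simp: add_pos_nonneg\<close>)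
  then show ?thesis
    unfolding l_def a_def b_def tangent_form_def .
qed

lemma qm_sph_tangent_form_perturbed:
  assumes "t > 0" "e > 0"
  shows "tangent_form t + pconst e * (5 * X0 + 5 * X1 - X2) \<in> qm_sph"
proof -
  have "tangent_form t + pconst (e / 8) + (5 * X0 + 5 * X1 - X2 - pconst (1 / 8)) * pconst e \<in> qm_sph"
    using assms
    by (intro qm_sph_add qm_sph_tangent_form_add_pconst qm_sph_mult_sos_sph[OF qm_sph_interior_form]
        sos_sph_pconst) simp_all
  moreover have "pconst (1 / 8) * pconst e = pconst (e / 8)"
    by (simp add: pconst_mult)
  ultimately show ?thesis
    by (simp add: algebra_simps)
qed

section \<open>The cone St_closed\<close>

lemma cube_amgm:
  fixes x y :: real
  assumes "x \<ge> 0" "y \<ge> 0"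
  shows "27 * x * y^2 \<le> (x + 2 * y)^3"
proof -
  have "(x + 2 * y)^3 - 27 * x * y^2 = (x - y)^2 * (x + 8 * y)"
    by (simp add: algebra_simps power2_eq_square power3_eq_cube)
  moreover have "(x - y)^2 * (x + 8 * y) \<ge> 0"
    using assms by simp
  ultimately show ?thesis by linarith
qed

lemma tangent_inequality:
  fixes x0 x1 x2 t :: real
  assumes "x0 \<ge> 0" "x1 \<ge> 0" "x0 * x1^2 - x2^3 \<ge> 0" "t > 0"
  shows "3 * t * x2 \<le> t^3 * x0 + 2 * x1"
proof (cases "x2 \<le> 0")
  case True
  then have "3 * t * x2 \<le> 0"
    using assms(4) by (simp add: mult_nonneg_nonpos)
  moreover have "0 \<le> t^3 * x0 + 2 * x1"
    using assms by simp
  ultimately show ?thesis by linarith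
next
  case False
  have "(3 * t * x2)^3 = 27 * t^3 * x2^3"
    by (simp add: power_mult_distrib)
  also have "\<dots> \<le> 27 * t^3 * (x0 * x1^2)"
    using assms by (intro mult_left_mono) auto
  also have "\<dots> = 27 * (t^3 * x0) * x1^2"
    by simp
  also have "\<dots> \<le> (t^3 * x0 + 2 * x1)^3"
    using assms by (intro cube_amgm) auto
  finally have "(3 * t * x2)^Suc 2 \<le> (t^3 * x0 + 2 * x1)^Suc 2"
    by (simp add: numeral_3_eq_3)
  then show ?thesis
    by (rule power_le_imp_le_base) (use assms in simp)
qed

text \<open>The optimal tangent is t = sqrt (x2 / x0); on the boundary x0 = 0 any large t works.\<close>

lemma cusp_nonneg_if_tangent_inequalities:
  fixes x0 x1 x2 :: real
  assumes "x0 \<ge> 0" "x1 \<ge> 0" and tangent: "\<And>t. t > 0 \<Longrightarrow> 3 * t * x2 \<le> t^3 * x0 + 2 * x1"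
  shows "x0 * x1^2 - x2^3 \<ge> 0"
proof (cases "x2 \<le> 0")
  case True
  then have "x2^3 \<le> 0"
    by (simp add: power_le_zero_eq)
  moreover have "x0 * x1^2 \<ge> 0"
    using assms by simp
  ultimately show ?thesis by linarith
next
  case False
  then have x2: "x2 > 0" by simp
  show ?thesis
  proof (cases "x0 = 0")
    case True
    have "3 * ((2 * x1 + 1) / (3 * x2)) * x2 \<le> ((2 * x1 + 1) / (3 * x2))^3 * x0 + 2 * x1"
      using assms x2 by (intro tangent) (simp add: add_nonneg_pos)
    then show ?thesis
      using True x2 by simp
  next
    case False
    then have x0: "x0 > 0" using assms by simp
    define t where "t = sqrt (x2 / x0)"
    have t: "t > 0" and t2: "t^2 = x2 / x0"
      unfolding t_def using x0 x2 by simp_all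
    have "t^3 * x0 = t * x2"
      using t2 x0 by (simp add: power3_eq_cube power2_eq_square field_simps)
    then have "t * x2 \<le> x1"
      using tangent[OF t] by simp
    then have "(t * x2)^2 \<le> x1^2"
      using t x2 by (intro power_mono) auto
    then have "x2 * x2^2 \<le> x0 * x1^2"
      using x0 by (simp add: power_mult_distrib t2 field_simps)
    then show ?thesis
      by (simp add: power3_eq_cube power2_eq_square)
  qed
qed

lemma St_closed_eq_Inter_halfspaces:
  "St_closed = {p. 0 \<le> inner (1, 0, 0) p} \<inter> {p. 0 \<le> inner (0, 1, 0) p}
     \<inter> (\<Inter>t\<in>{0<..}. {p. 0 \<le> inner (t^3, 2, - 3 * t) p})"
proof (intro set_eqI iffI)
  fix p :: "real \<times> real \<times> real"
  assume "p \<in> St_closed"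
  then obtain x0 x1 x2 where p: "p = (x0, x1, x2)" "x0 \<ge> 0" "x1 \<ge> 0" "x0 * x1^2 - x2^3 \<ge> 0"
    unfolding St_closed_def by auto
  then have "\<forall>t>0. 3 * t * x2 \<le> t^3 * x0 + 2 * x1"
    using tangent_inequality by blast
  then show "p \<in> {p. 0 \<le> inner (1, 0, 0) p} \<inter> {p. 0 \<le> inner (0, 1, 0) p}
     \<inter> (\<Inter>t\<in>{0<..}. {p. 0 \<le> inner (t^3, 2, - 3 * t) p})"
    using p by auto
next
  fix p :: "real \<times> real \<times> real"
  assume p: "p \<in> {p. 0 \<le> inner (1, 0, 0) p} \<inter> {p. 0 \<le> inner (0, 1, 0) p}
     \<inter> (\<Inter>t\<in>{0<..}. {p. 0 \<le> inner (t^3, 2, - 3 * t) p})"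
  obtain x0 x1 x2 where [simp]: "p = (x0, x1, x2)"
    by (cases p) auto
  have "x0 \<ge> 0" "x1 \<ge> 0"
    using p by auto
  moreover have "3 * t * x2 \<le> t^3 * x0 + 2 * x1" if "t > 0" for t
    using p that by (auto simp: algebra_simps)
  ultimately show "p \<in> St_closed"
    unfolding St_closed_def using cusp_nonneg_if_tangent_inequalities by auto
qed

lemma convex_St_closed: "convex St_closed"
  unfolding St_closed_eq_Inter_halfspaces
  by (intro convex_Int convex_INT convex_halfspace_ge)

lemma closed_St_closed: "closed St_closed"
  unfolding St_closed_eq_Inter_halfspaces
  by (intro closed_Int closed_INT ballI closed_halfspace_ge)

lemma closure_St_open: "closure St_open = St_closed"
proof
  show "closure St_open \<subseteq> St_closed"
    by (rule closure_minimal[OF _ closed_St_closed]) (auto simp: St_open_def St_closed_def)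
next
  show "St_closed \<subseteq> closure St_open"
  proof
    fix p assume "p \<in> St_closed"
    then obtain x0 x1 x2 where p: "p = (x0, x1, x2)" "x0 \<ge> 0" "x1 \<ge> 0" "x0 * x1^2 - x2^3 \<ge> 0"
      unfolding St_closed_def by auto
    show "p \<in> closure St_open"
      unfolding closure_approachable
    proof (intro allI impI)
      fix e :: real assume e: "e > 0"
      have "(x0 + e / 2) * x1^2 - x2^3 = (x0 * x1^2 - x2^3) + e / 2 * x1^2"
        by (simp add: algebra_simps)
      moreover have "e / 2 * x1^2 \<ge> 0"
        using e by simp
      ultimately have "(x0 + e / 2) * x1^2 - x2^3 \<ge> 0"
        using p by linarith
      then have "(x0 + e / 2, x1, x2) \<in> St_open"
        using p e unfolding St_open_def by auto
      moreover have "dist (x0 + e / 2, x1, x2) p < e"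
        using e p by (simp add: dist_Pair_Pair dist_real_def)
      ultimately show "\<exists>y\<in>St_open. dist y p < e" by blast
    qed
  qed
qed

lemma St_closed_form_pos:
  assumes "p \<in> St_closed" "p \<noteq> 0"
  shows "case p of (x0, x1, x2) \<Rightarrow> 2 * x0 + 2 * x1 - 3 * x2 > 0"
proof (rule ccontr)
  obtain x0 x1 x2 where p: "p = (x0, x1, x2)" "x0 \<ge> 0" "x1 \<ge> 0" "x0 * x1^2 - x2^3 \<ge> 0"
    using assms(1) unfolding St_closed_def by auto
  have tangent: "3 * x2 \<le> x0 + 2 * x1"
    using tangent_inequality[of x0 x1 x2 1] p by simp
  assume "\<not> ?thesis"
  then have le: "2 * x0 + 2 * x1 - 3 * x2 \<le> 0"
    using p by simp
  then have "x0 = 0"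
    using tangent p by simp
  then have "x2^3 \<le> 0"
    using p by simp
  then have "x2 \<le> 0"
    by (meson not_le zero_less_power)
  then have "x1 = 0" "x2 = 0"
    using le tangent p \<open>x0 = 0\<close> by auto
  then show False
    using assms p \<open>x0 = 0\<close> by (simp add: zero_prod_def)
qed

lemma St_closed_pointed: "St_closed \<inter> uminus ` St_closed = {0}"
proof (intro equalityI subsetI)
  fix p assume p: "p \<in> St_closed \<inter> uminus ` St_closed"
  then obtain q where q: "q \<in> St_closed" "p = - q"
    by auto
  show "p \<in> {0}"
  proof (rule ccontr)
    assume "p \<notin> {0}"
    then have "case p of (x0, x1, x2) \<Rightarrow> 2 * x0 + 2 * x1 - 3 * x2 > 0"
      "case q of (x0, x1, x2) \<Rightarrow> 2 * x0 + 2 * x1 - 3 * x2 > 0"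
      using St_closed_form_pos p q by auto
    then show False
      using q by (cases q) auto
  qed
next
  fix p :: "real \<times> real \<times> real"
  assume "p \<in> {0}"
  moreover have "(0 :: real \<times> real \<times> real) \<in> St_closed"
    by (simp add: St_closed_def zero_prod_def)
  ultimately show "p \<in> St_closed \<inter> uminus ` St_closed"
    by (auto intro: image_eqI[of 0 uminus 0])
qed

section \<open>The moment relaxations\<close>

lemma quadmod_Gt_nonneg:
  assumes "l \<in> quadmod k Gt" "(a, b, c) \<in> St_closed" "a^2 + b^2 + c^2 = 1"
  shows "peval l (a, b, c) \<ge> 0"
proof -
  obtain \<sigma>0 \<sigma> where "is_sos \<sigma>0" "\<forall>h\<in>Gt. is_sos (\<sigma> h)" and l: "l = \<sigma>0 + (\<Sum>h\<in>Gt. \<sigma> h * h)"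
    using assms(1) unfolding quadmod_def by blast
  moreover have "\<forall>h\<in>Gt. peval h (a, b, c) \<ge> 0"
    using assms(2,3) unfolding Gt_def St_closed_def by (auto simp: peval_simps)
  ultimately show ?thesis
    unfolding l by (auto simp: peval_add peval_sum peval_mult peval_sos_nonneg
        intro!: add_nonneg_nonneg sum_nonneg mult_nonneg_nonneg)
qed

lemma peval_linform:
  assumes "is_linform l"
  shows "peval l (a, b, c) = Poly_Mapping.lookup l (1, 0, 0) * a + Poly_Mapping.lookup l (0, 1, 0) * b
    + Poly_Mapping.lookup l (0, 0, 1) * c"
proof -
  have "mdeg m = 1 \<Longrightarrow> m \<in> {(1, 0, 0), (0, 1, 0), (0, 0, 1)}" for m
    by (cases m) (auto simp: mdeg_def)
  then have "Poly_Mapping.keys l \<subseteq> {(1, 0, 0), (0, 1, 0), (0, 0, 1)}"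
    using assms unfolding is_linform_def by blast
  then have "peval l (a, b, c)
      = (\<Sum>m\<in>{(1, 0, 0), (0, 1, 0), (0, 0, 1)}. Poly_Mapping.lookup l m * mono_eval m (a, b, c))"
    by (intro peval_eq_sum_mono_eval_superset) auto
  then show ?thesis
    by (simp add: mono_eval_def)
qed

lemma THk_eq_Inter_halfspaces:
  "THk k G = (\<Inter>l\<in>{l \<in> quadmod k G. is_linform l}.
     {z. inner (Poly_Mapping.lookup l (0, 1, 0), Poly_Mapping.lookup l (0, 0, 1)) z
           \<ge> - Poly_Mapping.lookup l (1, 0, 0)})"
proof -
  have "0 \<le> peval l (1, a, b) \<longleftrightarrow> - Poly_Mapping.lookup l (1, 0, 0)
      \<le> inner (Poly_Mapping.lookup l (0, 1, 0), Poly_Mapping.lookup l (0, 0, 1)) (a, b)"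
    if "is_linform l" for l a b
    using that by (simp add: peval_linform mult.commute) (rule iffI; linarith)
  then show ?thesis
    unfolding THk_def by auto
qed

lemma convex_THk: "convex (THk k G)"
  unfolding THk_eq_Inter_halfspaces by (intro convex_INT convex_halfspace_ge)

lemma closed_THk: "closed (THk k G)"
  unfolding THk_eq_Inter_halfspaces by (intro closed_INT ballI closed_halfspace_ge)

text \<open>A linear form is homogeneous, so its sign at (1, x1, x2) is its sign at the rescaled point on
  the unit sphere.\<close>

lemma S_subset_THk: "S \<subseteq> THk k Gt"
proof
  fix z assume "z \<in> S"
  then obtain x1 x2 where z: "z = (x1, x2)" "x1 \<ge> 0" "x1^2 - x2^3 \<ge> 0"
    unfolding S_def by auto
  define r where "r = sqrt (1 + x1^2 + x2^2)"
  have r: "r > 0"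
    unfolding r_def by (simp add: add_pos_nonneg)
  have "1 / r * (x1 / r)^2 - (x2 / r)^3 = (x1^2 - x2^3) / r^3"
    using r by (simp add: field_simps power2_eq_square power3_eq_cube)
  also have "\<dots> \<ge> 0"
    using z r by simp
  finally have on_cone: "(1 / r, x1 / r, x2 / r) \<in> St_closed"
    using r z unfolding St_closed_def by simp
  have "(1 / r)^2 + (x1 / r)^2 + (x2 / r)^2 = (1 + x1^2 + x2^2) / r^2"
    by (simp add: power_divide add_divide_distrib)
  also have "\<dots> = 1"
  proof -
    have "1 + x1^2 + x2^2 > 0"
      by (simp add: add_pos_nonneg)
    then show ?thesis
      unfolding r_def by (simp add: add_nonneg_nonneg)
  qed
  finally have on_sphere: "(1 / r)^2 + (x1 / r)^2 + (x2 / r)^2 = 1" .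
  show "z \<in> THk k Gt"
    unfolding THk_def z
  proof clarify
    fix l assume l: "l \<in> quadmod k Gt" "is_linform l"
    have "peval l (1, x1, x2) = r * peval l (1 / r, x1 / r, x2 / r)"
      using r by (simp add: peval_linform[OF l(2)] field_simps)
    then show "peval l (1, x1, x2) \<ge> 0"
      using quadmod_Gt_nonneg[OF l(1) on_cone on_sphere] r by simp
  qed
qed

lemma Gt_eq: "Gt = {X1, cusp, X0, sph - 1, 1 - sph}"
  unfolding Gt_def cusp_def sph_def by (simp add: algebra_simps)

lemma Gt_elements_distinct:
  "X1 \<noteq> cusp" "X1 \<noteq> X0" "X1 \<noteq> sph - 1" "X1 \<noteq> 1 - sph" "cusp \<noteq> X0" "cusp \<noteq> sph - 1"
  "cusp \<noteq> 1 - sph" "X0 \<noteq> sph - 1" "X0 \<noteq> 1 - sph" "sph - 1 \<noteq> 1 - sph"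
proof -
  have neq: "peval f v \<noteq> peval g v \<Longrightarrow> f \<noteq> g" for f g v
    by auto
  show "X1 \<noteq> cusp" "X1 \<noteq> X0" "X1 \<noteq> sph - 1" "X1 \<noteq> 1 - sph"
    by (rule neq[where v = "(0, 1, 0)"], simp add: cusp_def sph_def peval_simps)+
  show "cusp \<noteq> X0"
    by (rule neq[where v = "(1, 0, 0)"]) (simp add: cusp_def peval_simps)
  show "cusp \<noteq> sph - 1" "cusp \<noteq> 1 - sph" "X0 \<noteq> sph - 1" "X0 \<noteq> 1 - sph" "sph - 1 \<noteq> 1 - sph"
    by (rule neq[where v = "(0, 0, 0)"], simp add: cusp_def sph_def peval_simps)+
qed

lemma qm_sph_subset_quadmod:
  assumes "p \<in> qm_sph"
  shows "\<exists>k\<ge>1. p \<in> quadmod k Gt"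
proof -
  obtain s0 s1 s2 s3 q where s: "is_sos s0" "is_sos s1" "is_sos s2" "is_sos s3"
    and p: "p = s0 + X1 * s1 + cusp * s2 + X0 * s3 + (sph - 1) * q"
    using assms by (rule qm_sphE)
  \<comment> \<open>q = ((q + 1) / 2)^2 - ((q - 1) / 2)^2 splits the ideal part over sph - 1 and 1 - sph\<close>
  define qa where "qa = pconst (1 / 2) * (q + 1)"
  define qb where "qb = pconst (1 / 2) * (q - 1)"
  have "qa * qa - qb * qb = pconst (1 / 2) * pconst (1 / 2) * 4 * q"
    unfolding qa_def qb_def by (simp add: algebra_simps)
  then have q: "(sph - 1) * q = qa * qa * (sph - 1) + qb * qb * (1 - sph)"
    by (simp add: pconst_mult pconst_numeral[symmetric] algebra_simps)
  define \<sigma> where "\<sigma> h = (if h = X1 then s1 else if h = cusp then s2 else if h = X0 then s3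
    else if h = sph - 1 then qa * qa else qb * qb)" for h
  have "p = s0 + (\<Sum>h\<in>Gt. \<sigma> h * h)"
    unfolding p q Gt_eq using Gt_elements_distinct by (simp add: \<sigma>_def algebra_simps)
  moreover have "\<forall>h\<in>Gt. is_sos (\<sigma> h)"
    using s by (simp add: \<sigma>_def is_sos_square)
  moreover define k where "k = pdeg s0 + (\<Sum>h\<in>Gt. pdeg (\<sigma> h * h)) + 1"
  moreover have "\<forall>h\<in>Gt. pdeg (\<sigma> h * h) \<le> 2 * k"
    using member_le_sum[of _ Gt "\<lambda>h. pdeg (\<sigma> h * h)"] unfolding k_def Gt_eq by fastforce
  moreover have "pdeg s0 \<le> 2 * k"
    unfolding k_def by simp
  ultimately have "p \<in> quadmod k Gt"
    unfolding quadmod_def using s(1) by blast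
  then show ?thesis
    unfolding k_def by auto
qed

lemma is_linform_add: "is_linform p \<Longrightarrow> is_linform q \<Longrightarrow> is_linform (p + q)"
  unfolding is_linform_def using keys_add[of p q] by blast

lemma is_linform_diff: "is_linform p \<Longrightarrow> is_linform q \<Longrightarrow> is_linform (p - q)"
  unfolding is_linform_def using keys_diff[of p q] by blast

lemma is_linform_pconst_mult: "is_linform p \<Longrightarrow> is_linform (pconst c * p)"
proof -
  have "Poly_Mapping.keys (pconst c * p) \<subseteq> {a + b |a b. a \<in> Poly_Mapping.keys (pconst c) \<and> b \<in> Poly_Mapping.keys p}"
    by (rule keys_mult)
  also have "\<dots> \<subseteq> Poly_Mapping.keys p"
    by (auto simp: pconst_def zero_prod_def split: if_splits)
  finally show "is_linform p \<Longrightarrow> is_linform (pconst c * p)"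
    unfolding is_linform_def by blast
qed

lemma is_linform_numeral_mult: "is_linform p \<Longrightarrow> is_linform (numeral w * p)"
  using is_linform_pconst_mult[of p "numeral w"] by (simp add: pconst_numeral)

lemma is_linform_X0: "is_linform X0"
  and is_linform_X1: "is_linform X1"
  and is_linform_X2: "is_linform X2"
  by (simp_all add: is_linform_def X0_def X1_def X2_def mdeg_def)

lemma is_linform_tangent_form_perturbed:
  "is_linform (tangent_form t + pconst e * (5 * X0 + 5 * X1 - X2))"
  unfolding tangent_form_def
  by (intro is_linform_add is_linform_diff is_linform_pconst_mult is_linform_numeral_mult
      is_linform_X0 is_linform_X1 is_linform_X2)

lemma exists_pos_perturbation_neg:
  fixes v w :: real
  assumes "v < 0"
  shows "\<exists>e>0. v + e * w < 0"
proof (cases "w \<le> 0")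
  case True
  then show ?thesis
    using assms by (intro exI[of _ 1]) simp
next
  case False
  then show ?thesis
    using assms by (intro exI[of _ "- v / (2 * w)"]) (simp add: field_simps)
qed

lemma Inter_THk_subset_S: "(\<Inter>k\<in>{1..}. THk k Gt) \<subseteq> S"
proof
  fix z assume z: "z \<in> (\<Inter>k\<in>{1..}. THk k Gt)"
  obtain x1 x2 where [simp]: "z = (x1, x2)"
    by (cases z)
  have nonneg: "peval L (1, x1, x2) \<ge> 0" if L: "L \<in> qm_sph" "is_linform L" for L
  proof -
    obtain k where "k \<ge> 1" "L \<in> quadmod k Gt"
      using qm_sph_subset_quadmod[OF L(1)] by blast
    then show ?thesis
      using z L(2) unfolding THk_def by auto
  qed
  have x1: "x1 \<ge> 0"
    using nonneg[OF qm_sph_X1 is_linform_X1] by simp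
  moreover have "x1^2 - x2^3 \<ge> 0"
  proof (rule ccontr)
    assume "\<not> ?thesis"
    then have lt: "x1^2 < x2^3" by simp
    have "x2 > 0"
    proof (rule ccontr)
      assume "\<not> x2 > 0"
      then have "x2^3 \<le> 0"
        by (simp add: power_le_zero_eq)
      then show False
        using lt by (metis not_le zero_le_power2 order_trans)
    qed
    define t where "t = sqrt x2"
    have t: "t > 0" "t^2 = x2"
      unfolding t_def using \<open>x2 > 0\<close> by simp_all
    have "x1^2 < (t^3)^2"
      using lt by (simp add: t(2)[symmetric] power_mult[symmetric] mult.commute)
    then have "x1 < t^3"
      by (rule power_less_imp_less_base) (use t in simp)
    moreover have "t * x2 = t^3"
      using t(2) by (simp add: power2_eq_square power3_eq_cube)
    ultimately have "t^3 + 2 * x1 - 3 * t * x2 < 0"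
      by simp
    then obtain e where e: "e > 0" "t^3 + 2 * x1 - 3 * t * x2 + e * (5 + 5 * x1 - x2) < 0"
      using exists_pos_perturbation_neg by blast
    have "peval (tangent_form t + pconst e * (5 * X0 + 5 * X1 - X2)) (1, x1, x2) \<ge> 0"
      by (rule nonneg[OF qm_sph_tangent_form_perturbed[OF t(1) e(1)] is_linform_tangent_form_perturbed])
    then show False
      using e(2) by (simp add: peval_simps)
  qed
  ultimately show "z \<in> S"
    unfolding S_def by simp
qed

lemma closure_convex_hull_S: "closure (convex hull S) = (\<Inter>k\<in>{1..}. THk k Gt)"
proof
  show "closure (convex hull S) \<subseteq> (\<Inter>k\<in>{1..}. THk k Gt)"
  proof (rule INT_greatest)
    fix k :: nat
    show "closure (convex hull S) \<subseteq> THk k Gt"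
      by (rule closure_minimal[OF hull_minimal[of S _ convex] closed_THk])
        (simp_all add: S_subset_THk convex_THk)
  qed
  show "(\<Inter>k\<in>{1..}. THk k Gt) \<subseteq> closure (convex hull S)"
    using Inter_THk_subset_S hull_subset[of S convex] closure_subset[of "convex hull S"] by blast
qed

theorem mainTheorem17:
  shows "closure St_open = St_closed
    \<and> (\<forall>x\<in>convex hull (closure St_open) - {0}.
         (case x of (x0,x1,x2) \<Rightarrow> 2*x0 + 2*x1 - 3*x2 > 0))
    \<and> closed (convex hull (closure St_open))
    \<and> convex hull (closure St_open) \<inter> uminus ` (convex hull (closure St_open)) = {0}
    \<and> closure (convex hull S) = (\<Inter>k\<in>{1..}. THk k Gt)"
proof -
  have hull: "convex hull (closure St_open) = St_closed"
    unfolding closure_St_open by (simp add: convex_hull_eq convex_St_closed)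
  have "\<forall>x\<in>St_closed - {0}. case x of (x0, x1, x2) \<Rightarrow> 2 * x0 + 2 * x1 - 3 * x2 > 0"
    using St_closed_form_pos by blast
  then show ?thesis
    unfolding hull
    using closure_St_open closed_St_closed St_closed_pointed closure_convex_hull_S by (intro conjI)
qed

end
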